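(* Let $\nu\in A_2$, $0<p<\infty$, and let $\mathcal D$ be a dyadic system in $\mathbb R^n$. Then $\mathbf B^p_\nu(\mathbb R^n,\mathcal D)\subset\mathrm{VMO}_\nu(\mathbb R^n,\mathcal D)$.
   Context: $A_2$: weights $w$ with $\sup_Q(\frac1{|Q|}\int_Qw)(\frac1{|Q|}\int_Qw^{-1})<\infty$; $w(E)=\int_Ew$. A dyadic system is any $\mathcal D^\omega=\bigcup_k\{2^{-k}([0,1)^n+m+(-1)^k\omega):m\in\mathbb Z^n\}$, $\omega\in\{0,\frac13,\frac23\}^n$. $\|b\|^p_{\mathbf B^p_\nu(\mathbb R^n,\mathcal D)}:=\sum_{Q\in\mathcal D}\big(\frac1{\nu(Q)}\int_Q|b-\langle b\rangle_Q|\big)^p$, $\langle b\rangle_Q$ the average. $\mathrm{BMO}_\nu(\mathbb R^n,\mathcal D)$ is the set of $b\in L^1_{loc}$ with $\sup_{Q\in\mathcal D}\frac1{\nu(Q)}\int_Q|b-\langle b\rangle_Q|<\infty$, and $\mathrm{VMO}_\nu(\mathbb R^n,\mathcal D)$ the set of such $b$ for which $\frac1{\nu(Q)}\int_Q|b-\langle b\rangle_Q|\to0$ uniformly over $Q\in\mathcal D$ as $\ell(Q)\to0$, as $\ell(Q)\to\infty$, and for $Q\subset\mathbb R^n\setminus B(x_0,a)$ as $a\to\infty$ ($x_0$ a fixed point). *)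

theory Defs
  imports "HOL-Analysis.Analysis"
begin

definition cube :: "real^'n \<Rightarrow> real \<Rightarrow> (real^'n) set" where
  "cube a l = cbox a (a + l *\<^sub>R One)"

definition wmeas :: "(real^'n \<Rightarrow> real) \<Rightarrow> (real^'n) set \<Rightarrow> real" where
  "wmeas w E = (LINT x:E|lborel. w x)"

definition avg :: "(real^'n \<Rightarrow> real) \<Rightarrow> (real^'n) set \<Rightarrow> real" where
  "avg f Q = (LINT x:Q|lborel. f x) / measure lborel Q"

definition A2 :: "(real^'n \<Rightarrow> real) \<Rightarrow> bool" where
  "A2 w \<longleftrightarrow> w \<in> borel_measurable lborel \<and> (AE x in lborel. w x > 0) \<and>
     (\<forall>a l. 0 < l \<longrightarrow> set_integrable lborel (cube a l) w
                     \<and> set_integrable lborel (cube a l) (\<lambda>x. inverse (w x))) \<and>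
     (\<exists>C. \<forall>a l. 0 < l \<longrightarrow> avg w (cube a l) * avg (\<lambda>x. inverse (w x)) (cube a l) \<le> C)"

definition L1loc :: "(real^'n \<Rightarrow> real) set" where
  "L1loc = {b. \<forall>K. compact K \<longrightarrow> set_integrable lborel K b}"

definition dyadic_params :: "(real^'n) set" where
  "dyadic_params = {\<omega>. \<forall>i. \<omega> $ i \<in> {0, 1/3, 2/3}}"

definition dcube :: "real^'n \<Rightarrow> int \<Rightarrow> int^'n \<Rightarrow> (real^'n) set" where
  "dcube \<omega> k m = {x. \<forall>i. 2 powr (- real_of_int k) * (real_of_int (m $ i) + (-1) powi k * \<omega> $ i) \<le> x $ i
                        \<and> x $ i < 2 powr (- real_of_int k) * (real_of_int (m $ i) + (-1) powi k * \<omega> $ i + 1)}"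

definition dyadic_system :: "real^'n \<Rightarrow> (real^'n) set set" where
  "dyadic_system \<omega> = {dcube \<omega> k m | k m. True}"

definition wosc :: "(real^'n \<Rightarrow> real) \<Rightarrow> (real^'n \<Rightarrow> real) \<Rightarrow> (real^'n) set \<Rightarrow> real" where
  "wosc \<nu> b Q = (LINT x:Q|lborel. \<bar>b x - avg b Q\<bar>) / wmeas \<nu> Q"

definition Besov :: "(real^'n \<Rightarrow> real) \<Rightarrow> real \<Rightarrow> real^'n \<Rightarrow> (real^'n \<Rightarrow> real) set" where
  "Besov \<nu> p \<omega> = {b \<in> L1loc.
      (\<Sum>\<^sub>\<infinity>Q\<in>dyadic_system \<omega>. ennreal (wosc \<nu> b Q powr p)) < \<infinity>}"

definition BMO :: "(real^'n \<Rightarrow> real) \<Rightarrow> real^'n \<Rightarrow> (real^'n \<Rightarrow> real) set" where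
  "BMO \<nu> \<omega> = {b \<in> L1loc. \<exists>C. \<forall>Q\<in>dyadic_system \<omega>. wosc \<nu> b Q \<le> C}"

text \<open>VMO; side length of dcube omega k m is 2^{-k}; the fixed point x0 is taken to be 0.\<close>
definition VMO :: "(real^'n \<Rightarrow> real) \<Rightarrow> real^'n \<Rightarrow> (real^'n \<Rightarrow> real) set" where
  "VMO \<nu> \<omega> = {b \<in> BMO \<nu> \<omega>.
      (\<forall>\<epsilon>>0. \<exists>\<delta>>0. \<forall>k m. 2 powr (- real_of_int k) < \<delta> \<longrightarrow> wosc \<nu> b (dcube \<omega> k m) < \<epsilon>) \<and>
      (\<forall>\<epsilon>>0. \<exists>R. \<forall>k m. 2 powr (- real_of_int k) > R \<longrightarrow> wosc \<nu> b (dcube \<omega> k m) < \<epsilon>) \<and>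
      (\<forall>\<epsilon>>0. \<exists>a. \<forall>Q\<in>dyadic_system \<omega>. Q \<subseteq> - ball 0 a \<longrightarrow> wosc \<nu> b Q < \<epsilon>)}"

end

theory Submission
  imports Defs
begin

text \<open>
  A finite sum \<open>\<Sum>\<^sub>Q osc(Q)\<^sup>p\<close> can have only finitely many terms above any \<open>\<epsilon>\<^sup>p\<close>. So for every
  \<open>\<epsilon> > 0\<close> all but finitely many dyadic cubes have weighted oscillation below \<open>\<epsilon>\<close>. A dyadic
  cube determines its generation, hence its side length, so the exceptional cubes occupy
  finitely many side lengths and lie in a bounded region; this gives the three limits
  defining VMO, and the finitely many exceptions together with \<open>\<epsilon>\<close> bound the oscillation
  (BMO).
\<close>

lemma finite_superlevel_if_infsum_powr_finite:
  fixes f :: "'a \<Rightarrow> real"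
  assumes "0 < p" and "0 < \<epsilon>" and sum_finite: "(\<Sum>\<^sub>\<infinity>x\<in>A. ennreal (f x powr p)) < \<infinity>"
  shows "finite {x \<in> A. \<epsilon> \<le> f x}"
proof (rule ccontr)
  let ?S = "{x \<in> A. \<epsilon> \<le> f x}"
  assume "infinite ?S"
  moreover have "ennreal (\<epsilon> powr p) \<le> ennreal (f x powr p)" if "x \<in> ?S" for x
    using that \<open>0 < \<epsilon>\<close> \<open>0 < p\<close> by (intro ennreal_leI powr_mono2) auto
  ultimately have "(\<Sum>\<^sub>\<infinity>x\<in>?S. ennreal (f x powr p)) = \<infinity>"
    using \<open>0 < \<epsilon>\<close> by (intro infsum_superconst_infinite_ennreal[where b = "ennreal (\<epsilon> powr p)"]) auto
  moreover have "(\<Sum>\<^sub>\<infinity>x\<in>?S. ennreal (f x powr p)) \<le> (\<Sum>\<^sub>\<infinity>x\<in>A. ennreal (f x powr p))"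
    by (intro infsum_mono_neutral nonneg_summable_on_complete) auto
  ultimately show False
    using sum_finite by (simp add: top_unique)
qed

lemma bounded_above_if_finite_superlevel:
  fixes f :: "'a \<Rightarrow> real"
  assumes "finite {x \<in> A. \<epsilon> \<le> f x}"
  shows "\<exists>C. \<forall>x\<in>A. f x \<le> C"
proof -
  define C where "C = Max (insert \<epsilon> (f ` {x \<in> A. \<epsilon> \<le> f x}))"
  have "f x \<le> C" if "x \<in> A" for x
  proof (cases "\<epsilon> \<le> f x")
    case True
    then show ?thesis
      using that assms unfolding C_def by (intro Max_ge) auto
  next
    case False
    moreover have "\<epsilon> \<le> C"
      using assms unfolding C_def by (intro Max_ge) auto
    ultimately show ?thesis by linarith
  qed
  then show ?thesis by blast
qed

lemma finite_family_meets_ball: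
  fixes F :: "'a::metric_space set set"
  assumes "finite F" and "{} \<notin> F"
  shows "\<exists>r. \<forall>Q\<in>F. \<not> Q \<subseteq> - ball x r"
proof -
  have "bounded ((\<lambda>Q. SOME y. y \<in> Q) ` F)"
    using assms(1) by blast
  then obtain r where r: "(\<lambda>Q. SOME y. y \<in> Q) ` F \<subseteq> ball x r"
    using bounded_subset_ballD by blast
  have "(SOME y. y \<in> Q) \<in> Q \<inter> ball x r" if "Q \<in> F" for Q
    using that assms(2) r by (auto simp: some_in_eq)
  then show ?thesis by blast
qed

lemma finite_pos_lower_bound:
  fixes s :: "'a \<Rightarrow> real"
  assumes "finite K" and "\<And>k. k \<in> K \<Longrightarrow> 0 < s k"
  shows "\<exists>\<delta>>0. \<forall>k\<in>K. \<delta> \<le> s k"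
proof (intro exI conjI ballI)
  show "0 < Min (insert 1 (s ` K))" using assms by auto
  show "Min (insert 1 (s ` K)) \<le> s k" if "k \<in> K" for k using assms that by auto
qed

lemma halfopen_cube_side_le:
  fixes a b :: "real^'n"
  assumes "0 < s"
    and sub: "{x. \<forall>i. a$i \<le> x$i \<and> x$i < a$i + s} \<subseteq> {x. \<forall>i. b$i \<le> x$i \<and> x$i < b$i + t}"
  shows "s \<le> t"
proof (rule ccontr)
  assume "\<not> s \<le> t"
  fix i :: 'n
  have "b$i \<le> a$i" "a$i < b$i + t"
    using sub \<open>0 < s\<close> by (auto dest!: subsetD[where c = a])
  define d where "d = b$i + t - a$i"
  \<comment> \<open>the point \<open>a + d\<close> lies in the first cube but on the upper face of the second\<close>
  have "0 \<le> d" "d < s"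
    using \<open>b$i \<le> a$i\<close> \<open>a$i < b$i + t\<close> \<open>\<not> s \<le> t\<close> by (auto simp: d_def)
  then have "(\<chi> j. a$j + d) \<in> {x. \<forall>i. a$i \<le> x$i \<and> x$i < a$i + s}"
    by auto
  then have "(\<chi> j. a$j + d)$i < b$i + t"
    using sub by blast
  then show False by (simp add: d_def)
qed

lemma dcube_halfopen_cube:
  "\<exists>a. dcube \<omega> k m = {x. \<forall>i. a$i \<le> x$i \<and> x$i < a$i + 2 powr (- real_of_int k)}"
  unfolding dcube_def
  by (rule exI[of _ "\<chi> i. 2 powr (- real_of_int k) * (real_of_int (m $ i) + (-1) powi k * \<omega> $ i)"])
    (auto simp: algebra_simps)

lemma dcube_generation_unique:
  assumes "dcube \<omega> k m = dcube \<omega> k' m'"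
  shows "k = k'"
proof -
  obtain a where a: "dcube \<omega> k m = {x. \<forall>i. a$i \<le> x$i \<and> x$i < a$i + 2 powr (- real_of_int k)}"
    using dcube_halfopen_cube by blast
  obtain a' where a': "dcube \<omega> k' m' = {x. \<forall>i. a'$i \<le> x$i \<and> x$i < a'$i + 2 powr (- real_of_int k')}"
    using dcube_halfopen_cube by blast
  have "2 powr (- real_of_int k) \<le> 2 powr (- real_of_int k')"
    using assms a a' by (intro halfopen_cube_side_le[of _ a a']) simp_all
  moreover have "2 powr (- real_of_int k') \<le> 2 powr (- real_of_int k)"
    using assms a a' by (intro halfopen_cube_side_le[of _ a' a]) simp_all
  ultimately show ?thesis by simp
qed

lemma dcube_nonempty: "dcube \<omega> k m \<noteq> {}"
proof -
  obtain a where "dcube \<omega> k m = {x. \<forall>i. a$i \<le> x$i \<and> x$i < a$i + 2 powr (- real_of_int k)}"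
    using dcube_halfopen_cube by blast
  then have "a \<in> dcube \<omega> k m" by simp
  then show ?thesis by blast
qed

lemma finite_generations_if_finite_cubes:
  assumes "finite {Q \<in> dyadic_system \<omega>. P Q}"
  shows "finite {k. \<exists>m. P (dcube \<omega> k m)}"
proof -
  define gen where "gen Q = (THE k. \<exists>m. dcube \<omega> k m = Q)" for Q
  have gen_dcube: "gen (dcube \<omega> k m) = k" for k m
    unfolding gen_def by (blast intro: the_equality dest: dcube_generation_unique)
  have "{k. \<exists>m. P (dcube \<omega> k m)} \<subseteq> gen ` {Q \<in> dyadic_system \<omega>. P Q}"
  proof
    fix k assume "k \<in> {k. \<exists>m. P (dcube \<omega> k m)}"
    then obtain m where "P (dcube \<omega> k m)" by blast
    then have "dcube \<omega> k m \<in> {Q \<in> dyadic_system \<omega>. P Q}"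
      unfolding dyadic_system_def by blast
    then show "k \<in> gen ` {Q \<in> dyadic_system \<omega>. P Q}"
      using gen_dcube by (metis image_eqI)
  qed
  then show ?thesis
    using assms by (rule finite_subset[OF _ finite_imageI])
qed

lemma Besov_finite_superlevel:
  assumes "b \<in> Besov \<nu> p \<omega>" and "0 < p" and "0 < \<epsilon>"
  shows "finite {Q \<in> dyadic_system \<omega>. \<epsilon> \<le> wosc \<nu> b Q}"
  using assms by (intro finite_superlevel_if_infsum_powr_finite[of p]) (auto simp: Besov_def)

lemma VMO_if_finite_superlevel:
  assumes "b \<in> L1loc" and fin: "\<And>\<epsilon>. 0 < \<epsilon> \<Longrightarrow> finite {Q \<in> dyadic_system \<omega>. \<epsilon> \<le> wosc \<nu> b Q}"
  shows "b \<in> VMO \<nu> \<omega>"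
  unfolding VMO_def
proof (intro CollectI conjI allI impI)
  show "b \<in> BMO \<nu> \<omega>"
    using assms bounded_above_if_finite_superlevel[OF fin[of 1]] by (auto simp: BMO_def)
next
  fix \<epsilon> :: real assume "0 < \<epsilon>"
  let ?K = "{k. \<exists>m. \<epsilon> \<le> wosc \<nu> b (dcube \<omega> k m)}"
  have "finite ?K"
    using fin[OF \<open>0 < \<epsilon>\<close>] by (rule finite_generations_if_finite_cubes)
  then obtain \<delta> where "0 < \<delta>" and \<delta>: "\<And>k. k \<in> ?K \<Longrightarrow> \<delta> \<le> 2 powr (- real_of_int k)"
    using finite_pos_lower_bound[of ?K "\<lambda>k. 2 powr (- real_of_int k)"] by auto
  have "wosc \<nu> b (dcube \<omega> k m) < \<epsilon>" if "2 powr (- real_of_int k) < \<delta>" for k m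
  proof (rule ccontr)
    assume "\<not> ?thesis"
    then have "\<delta> \<le> 2 powr (- real_of_int k)"
      by (intro \<delta>) (auto simp: not_less)
    with that show False by simp
  qed
  with \<open>0 < \<delta>\<close> show "\<exists>\<delta>>0. \<forall>k m. 2 powr (- real_of_int k) < \<delta> \<longrightarrow> wosc \<nu> b (dcube \<omega> k m) < \<epsilon>"
    by blast
  define R where "R = Max ((\<lambda>k. 2 powr (- real_of_int k)) ` ?K)"
  have R: "2 powr (- real_of_int k) \<le> R" if "k \<in> ?K" for k
    unfolding R_def using \<open>finite ?K\<close> that by (intro Max_ge) auto
  have "wosc \<nu> b (dcube \<omega> k m) < \<epsilon>" if "R < 2 powr (- real_of_int k)" for k m
  proof (rule ccontr)
    assume "\<not> ?thesis"
    then have "2 powr (- real_of_int k) \<le> R"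
      by (intro R) (auto simp: not_less)
    with that show False by simp
  qed
  then show "\<exists>R. \<forall>k m. R < 2 powr (- real_of_int k) \<longrightarrow> wosc \<nu> b (dcube \<omega> k m) < \<epsilon>"
    by blast
  have "{} \<notin> {Q \<in> dyadic_system \<omega>. \<epsilon> \<le> wosc \<nu> b Q}"
    using dcube_nonempty by (auto simp: dyadic_system_def)
  then obtain a where "\<And>Q. Q \<in> {Q \<in> dyadic_system \<omega>. \<epsilon> \<le> wosc \<nu> b Q} \<Longrightarrow> \<not> Q \<subseteq> - ball 0 a"
    using finite_family_meets_ball[OF fin[OF \<open>0 < \<epsilon>\<close>]] by blast
  then show "\<exists>a. \<forall>Q\<in>dyadic_system \<omega>. Q \<subseteq> - ball 0 a \<longrightarrow> wosc \<nu> b Q < \<epsilon>"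
    by force
qed

theorem lemma3p5:
  fixes \<nu> :: "real^'n \<Rightarrow> real" and p :: real and \<omega> :: "real^'n"
  assumes "A2 \<nu>" and "0 < p" and "\<omega> \<in> dyadic_params"
  shows "Besov \<nu> p \<omega> \<subseteq> VMO \<nu> \<omega>"
proof
  fix b assume "b \<in> Besov \<nu> p \<omega>"
  then show "b \<in> VMO \<nu> \<omega>"
    using \<open>0 < p\<close> by (intro VMO_if_finite_superlevel Besov_finite_superlevel) (auto simp: Besov_def)
qed

end
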